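(* Let $q\ge2$, $t,b\ge1$ and $n\ge bt+1$. For any $\sigma\in\Sigma_q$ and $j\in[0,b-1]$, let $\boldsymbol{Y}^{\sigma,j}_{n,q,b}:=\sigma^j\circ\boldsymbol{X}^{\sigma+1}_{n-j,q,b}$ (with $\sigma+1$ taken modulo $q$). Then \[ |\mathcal{D}_{t,b}(\boldsymbol{Y}^{\sigma,j}_{n,q,b})|=d_{q,b}(n,t)=D_{q,b}(n,t). \]
   Context: $\Sigma_q=\{0,\ldots,q-1\}$; $\sigma^j$ is $j$ copies of $\sigma$ and $\circ$ is concatenation. A $b$-burst-deletion at position $i\in[1,n-b+1]$ transforms $x_1\cdots x_n$ into $x_1\cdots x_{i-1}x_{i+b}\cdots x_n$. For $n\ge tb+1$, $t\ge 0$, $\mathcal{D}_{t,b}(\boldsymbol{x})$ is the set of all length-$(n-tb)$ sequences obtainable from $\boldsymbol{x}$ by $t$ successive $b$-burst-deletions ($\mathcal{D}_{0,b}(\boldsymbol{x})=\{\boldsymbol{x}\}$). $D_{q,b}(n,t)=\max\{|\mathcal{D}_{t,b}(\boldsymbol{x})|:\boldsymbol{x}\in\Sigma_q^n\}$. The $b$-cyclic sequence $\boldsymbol{X}^{\sigma}_{m,q,b}=X_1\cdots X_m$ has $X_i\equiv\sigma+\lfloor (i-1)/b\rfloor\pmod q$. For $m\ge bs+1$, $s\ge0$, $d_{q,b}(m,s):=|\mathcal{D}_{s,b}(\boldsymbol{X}^0_{m,q,b})|$; $d_{q,b}(m,s)=1$ if $m=bs\ge0$, and $d_{q,b}(m,s)=0$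 if $m<bs$ or $s<0$. *)

theory Defs
  imports Main
begin

text \<open>Positions are 0-based here: deleting the burst starting at 0-based index i
  corresponds to the paper's position i+1, with i + b <= length x.\<close>

definition burst_del :: "nat \<Rightarrow> nat \<Rightarrow> nat list \<Rightarrow> nat list" where
  "burst_del b i x = take i x @ drop (i + b) x"

definition burst_step :: "nat \<Rightarrow> nat list \<Rightarrow> nat list set" where
  "burst_step b x = {burst_del b i x | i. i + b \<le> length x}"

fun Dset :: "nat \<Rightarrow> nat \<Rightarrow> nat list \<Rightarrow> nat list set" where
  "Dset 0 b x = {x}"
| "Dset (Suc t) b x = (\<Union>y\<in>Dset t b x. burst_step b y)"

definition seqs :: "nat \<Rightarrow> nat \<Rightarrow> nat list set" where
  "seqs q n = {x. length x = n \<and> set x \<subseteq> {..<q}}"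

definition Dmax :: "nat \<Rightarrow> nat \<Rightarrow> nat \<Rightarrow> nat \<Rightarrow> nat" where
  "Dmax q b n t = Max {card (Dset t b x) | x. x \<in> seqs q n}"

definition Xcyc :: "nat \<Rightarrow> nat \<Rightarrow> nat \<Rightarrow> nat \<Rightarrow> nat list" where
  "Xcyc \<sigma> m q b = map (\<lambda>k. (\<sigma> + k div b) mod q) [0..<m]"

definition dcyc :: "nat \<Rightarrow> nat \<Rightarrow> int \<Rightarrow> int \<Rightarrow> nat" where
  "dcyc q b m s =
     (if s < 0 \<or> m < int b * s then 0
      else if m = int b * s then 1
      else card (Dset (nat s) b (Xcyc 0 (nat m) q b)))"

definition Ycyc :: "nat \<Rightarrow> nat \<Rightarrow> nat \<Rightarrow> nat \<Rightarrow> nat \<Rightarrow> nat list" where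
  "Ycyc \<sigma> j n q b = replicate j \<sigma> @ Xcyc ((\<sigma> + 1) mod q) (n - j) q b"

end

theory Submission
  imports Defs
begin

text \<open>Read a descendant \<open>y \<in> Dset t b x\<close> from the left: its first symbol is a block head
  \<open>x ! (k * b)\<close> with \<open>k \<le> t\<close>, preceded by \<open>k\<close> deleted blocks, and the rest of \<open>y\<close> is a
  descendant of the suffix after that head. Attributing each first symbol to its earliest
  head makes this decomposition disjoint, so \<open>card (Dset t b x)\<close> is a sum, over distinct head
  symbols, of counts for shorter suffixes. For suffixes of \<open>b\<close>-cyclic sequences the first
  \<open>min q (t + 1)\<close> heads are distinct and every suffix after a head is again such a suffix,
  which yields the recursion \<open>d(n,t) = (\<Sum>k<min q (t + 1). d(n - k b - 1, t - k))\<close> exactly.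
  For an arbitrary \<open>x\<close> at most \<open>min q (t + 1)\<close> heads are fresh, and the terms of the
  recursion decrease in \<open>k\<close> because \<open>d(m,s) \<le> d(m + b, s + 1)\<close>, so the same recursion bounds
  \<open>card (Dset t b x)\<close> from above.\<close>

section \<open>Normal form of iterated burst deletion\<close>

text \<open>A burst deletion inside \<open>x\<close> can be postponed until a left-to-right reading reaches it, so
  iterated burst deletion amounts to reading \<open>x\<close> once, each time either keeping the next symbol
  or deleting the next \<open>b\<close> symbols.\<close>

inductive burst_reduct :: "nat \<Rightarrow> nat \<Rightarrow> nat list \<Rightarrow> nat list \<Rightarrow> bool" for b where
  base: "burst_reduct b 0 x x"
| keep: "burst_reduct b t x y \<Longrightarrow> burst_reduct b t (c # x) (c # y)"
| drop_block: "burst_reduct b t x y \<Longrightarrow> length u = b \<Longrightarrow> burst_reduct b (Suc t) (u @ x) y"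

lemma burst_reduct_length: "burst_reduct b t x y \<Longrightarrow> length x = length y + t * b"
  by (induction rule: burst_reduct.induct) auto

lemma burst_reduct_append_left: "burst_reduct b t x y \<Longrightarrow> burst_reduct b t (w @ x) (w @ y)"
  by (induction w) (auto intro: burst_reduct.keep)

lemma burst_reduct_drop_blocks:
  "length a = k * b \<Longrightarrow> burst_reduct b t x y \<Longrightarrow> burst_reduct b (k + t) (a @ x) y"
proof (induction k arbitrary: a)
  case 0
  then show ?case by simp
next
  case (Suc k)
  have "burst_reduct b (k + t) (drop b a @ x) y"
    using Suc by simp
  then have "burst_reduct b (Suc (k + t)) (take b a @ drop b a @ x) y"
    using Suc.prems by (intro burst_reduct.drop_block) auto
  then show ?case
    by (metis add_Suc append_assoc append_take_drop_id)
qed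

lemma burst_reduct_insert_block:
  assumes "burst_reduct b t (x1 @ x2) y" and "length u = b"
  shows "burst_reduct b (Suc t) (x1 @ u @ x2) y"
  using assms
proof (induction "x1 @ x2" y arbitrary: x1 rule: burst_reduct.induct)
  case base
  have "burst_reduct b (Suc 0) (u @ x2) x2"
    using base.prems by (intro burst_reduct.drop_block burst_reduct.base)
  then show ?case
    using burst_reduct_append_left by fastforce
next
  case (keep t x y c)
  show ?case
  proof (cases x1)
    case Nil
    then show ?thesis
      using burst_reduct.drop_block[OF burst_reduct.keep[OF keep.hyps(1)] keep.prems, of c]
        keep.hyps(3)
      by simp
  next
    case (Cons a x1')
    then show ?thesis
      using keep burst_reduct.keep by fastforce
  qed
next
  case (drop_block t x y v)
  show ?case
  proof (cases "b \<le> length x1")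
    case True
    then obtain x1' where "x1 = v @ x1'"
      using drop_block.hyps(3,4) by (metis append_eq_append_conv_if append_take_drop_id)
    then show ?thesis
      using drop_block by (auto intro: burst_reduct.drop_block)
  next
    case False
    then obtain v' where v: "v = x1 @ v'" "x2 = v' @ x"
      using drop_block.hyps(3,4) by (metis append_eq_append_conv_if append_take_drop_id linorder_le_cases)
    have "length (x1 @ u @ v') = 2 * b"
      using v drop_block by simp
    from burst_reduct_drop_blocks[OF this drop_block.hyps(1)] show ?thesis
      using v by simp
  qed
qed

lemma burst_reduct_delete_front_block:
  assumes "burst_reduct b t x (m @ s)" and "length w + length m = b"
  shows "burst_reduct b (Suc t) (w @ x) s"
  using assms
proof (induction x "m @ s" arbitrary: m w rule: burst_reduct.induct)
  case base
  have "burst_reduct b (Suc 0) ((w @ m) @ s) s"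
    using base.prems by (intro burst_reduct.drop_block burst_reduct.base) simp
  then show ?case
    by simp
next
  case (keep t x y c)
  show ?case
  proof (cases m)
    case Nil
    then show ?thesis
      using burst_reduct.drop_block[OF burst_reduct.keep[OF keep.hyps(1)], of w c] keep by simp
  next
    case (Cons a m')
    then show ?thesis
      using keep.hyps(2)[of m' "w @ [c]"] keep.hyps(3) keep.prems by simp
  qed
next
  case (drop_block t x u)
  have "burst_reduct b (Suc t) (w @ x) s"
    using drop_block.hyps(2) drop_block.prems .
  from burst_reduct_insert_block[OF this drop_block.hyps(3)] show ?case
    by simp
qed

lemma burst_reduct_delete_block:
  assumes "burst_reduct b t x (p @ m @ s)" and "length m = b"
  shows "burst_reduct b (Suc t) x (p @ s)"
  using assms
proof (induction x "p @ m @ s" arbitrary: p rule: burst_reduct.induct)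
  case base
  have "burst_reduct b (Suc 0) (m @ s) s"
    using base.prems by (intro burst_reduct.drop_block burst_reduct.base)
  then show ?case
    using burst_reduct_append_left by fastforce
next
  case (keep t x y c)
  show ?case
  proof (cases p)
    case Nil
    show ?thesis
    proof (cases m)
      case Nil
      then show ?thesis
        using burst_reduct.drop_block[OF burst_reduct.keep[OF keep.hyps(1)], of "[]" c] keep \<open>p = []\<close>
        by simp
    next
      case (Cons a m')
      then show ?thesis
        using burst_reduct_delete_front_block[of b t x m' s "[c]"] keep \<open>p = []\<close> by simp
    qed
  next
    case (Cons a p')
    then show ?thesis
      using keep burst_reduct.keep by fastforce
  qed
next
  case (drop_block t x y u)
  then show ?case
    by (auto intro: burst_reduct.drop_block)
qed

lemma burst_step_iff: "y \<in> burst_step b x \<longleftrightarrow> (\<exists>p m s. x = p @ m @ s \<and> length m = b \<and> y = p @ s)"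
proof
  assume "y \<in> burst_step b x"
  then obtain i where i: "i + b \<le> length x" "y = take i x @ drop (i + b) x"
    by (auto simp: burst_step_def burst_del_def)
  have "x = take i x @ take b (drop i x) @ drop (i + b) x"
    by (metis add.commute append_take_drop_id drop_drop)
  moreover have "length (take b (drop i x)) = b"
    using i(1) by simp
  ultimately show "\<exists>p m s. x = p @ m @ s \<and> length m = b \<and> y = p @ s"
    using i(2) by (intro exI[of _ "take i x"] exI[of _ "take b (drop i x)"] exI[of _ "drop (i + b) x"]) simp
next
  assume "\<exists>p m s. x = p @ m @ s \<and> length m = b \<and> y = p @ s"
  then obtain p m s where "x = p @ m @ s" "length m = b" "y = p @ s"
    by blast
  then show "y \<in> burst_step b x"
    unfolding burst_step_def burst_del_def by (intro CollectI exI[of _ "length p"]) simp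
qed

lemma Dset_Suc_first: "Dset (Suc t) b x = (\<Union>z\<in>burst_step b x. Dset t b z)"
  by (induction t) auto

lemma Dset_append_left: "y \<in> Dset t b x \<Longrightarrow> w @ y \<in> Dset t b (w @ x)"
proof (induction t arbitrary: y)
  case 0
  then show ?case by simp
next
  case (Suc t)
  then obtain p m s where z: "p @ m @ s \<in> Dset t b x" and "length m = b" "y = p @ s"
    by (auto simp: burst_step_iff)
  then have "w @ y \<in> burst_step b (w @ p @ m @ s)"
    unfolding burst_step_iff by (intro exI[of _ "w @ p"] exI[of _ m] exI[of _ s]) simp
  then show ?case
    using Suc.IH[OF z] by (auto intro: UN_I)
qed

lemma Dset_eq_burst_reduct: "Dset t b x = {y. burst_reduct b t x y}"
proof (intro set_eqI iffI; unfold mem_Collect_eq)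
  show "burst_reduct b t x y" if "y \<in> Dset t b x" for y
    using that
  proof (induction t arbitrary: y)
    case 0
    then show ?case by (simp add: burst_reduct.base)
  next
    case (Suc t)
    then obtain p m s where "p @ m @ s \<in> Dset t b x" "length m = b" "y = p @ s"
      by (auto simp: burst_step_iff)
    then show ?case
      using Suc.IH burst_reduct_delete_block by blast
  qed
  show "y \<in> Dset t b x" if "burst_reduct b t x y" for y
    using that
  proof (induction rule: burst_reduct.induct)
    case (base x)
    then show ?case by simp
  next
    case (keep t x y c)
    then show ?case
      using Dset_append_left[of y t b x "[c]"] by simp
  next
    case (drop_block t x y u)
    have "x \<in> burst_step b (u @ x)"
      unfolding burst_step_iff using drop_block.hyps(2)
      by (intro exI[of _ "[]"] exI[of _ u] exI[of _ x]) simp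
    then show ?case
      unfolding Dset_Suc_first using drop_block.IH by (rule UN_I[where B = "\<lambda>z. Dset t b z"])
  qed
qed

section \<open>Decomposition by the first symbol\<close>

lemma burst_reduct_Nil_iff: "burst_reduct b t x [] \<longleftrightarrow> length x = t * b"
  using burst_reduct_length burst_reduct_drop_blocks[where y = "[]" and t = 0] burst_reduct.base
  by fastforce

lemma burst_reduct_Cons_imp:
  assumes "burst_reduct b t x (c # y)"
  shows "\<exists>k\<le>t. k * b < length x \<and> x ! (k * b) = c \<and> burst_reduct b (t - k) (drop (k * b + 1) x) y"
  using assms
proof (induction x "c # y" rule: burst_reduct.induct)
  case base
  then show ?case
    by (auto intro!: exI[of _ 0] burst_reduct.base)
next
  case keep
  then show ?case
    by (auto intro!: exI[of _ 0])
next
  case (drop_block t x u)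
  then obtain k where "k \<le> t" "k * b < length x" "x ! (k * b) = c"
      "burst_reduct b (t - k) (drop (k * b + 1) x) y"
    by blast
  then show ?case
    using drop_block.hyps(3) by (intro exI[of _ "Suc k"]) (auto simp: nth_append add.commute)
qed

lemma burst_reduct_ConsI:
  assumes "k * b < length x" and "burst_reduct b t (drop (k * b + 1) x) y"
  shows "burst_reduct b (k + t) x (x ! (k * b) # y)"
proof -
  have "x = take (k * b) x @ x ! (k * b) # drop (k * b + 1) x"
    using assms(1) by (simp add: id_take_nth_drop)
  moreover have "length (take (k * b) x) = k * b"
    using assms(1) by simp
  ultimately show ?thesis
    using burst_reduct_drop_blocks burst_reduct.keep[OF assms(2)] by metis
qed

lemma burst_reduct_Cons_iff:
  "burst_reduct b t x (c # y) \<longleftrightarrow>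
    (\<exists>k\<le>t. k * b < length x \<and> x ! (k * b) = c \<and> burst_reduct b (t - k) (drop (k * b + 1) x) y)"
  using burst_reduct_Cons_imp burst_reduct_ConsI[of _ b x "t - _" y] by fastforce

definition fresh_heads :: "nat \<Rightarrow> nat \<Rightarrow> nat list \<Rightarrow> nat set" where
  "fresh_heads b t x = {k. k \<le> t \<and> k * b < length x \<and> (\<forall>k'<k. x ! (k' * b) \<noteq> x ! (k * b))}"

lemma finite_fresh_heads: "finite (fresh_heads b t x)"
  unfolding fresh_heads_def by auto

lemma inj_on_fresh_heads: "inj_on (\<lambda>k. x ! (k * b)) (fresh_heads b t x)"
proof (rule inj_onI)
  fix i j
  assume "i \<in> fresh_heads b t x" "j \<in> fresh_heads b t x" "x ! (i * b) = x ! (j * b)"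
  then have "\<not> i < j" "\<not> j < i"
    unfolding fresh_heads_def by auto
  then show "i = j"
    by simp
qed

lemma fresh_head_exists:
  assumes "k \<le> t" and "k * b < length x"
  shows "\<exists>k0\<in>fresh_heads b t x. k0 \<le> k \<and> x ! (k0 * b) = x ! (k * b)"
proof -
  define P where "P k' \<longleftrightarrow> k' * b < length x \<and> x ! (k' * b) = x ! (k * b)" for k'
  define k0 where "k0 = (LEAST k'. P k')"
  have "P k"
    using assms(2) by (simp add: P_def)
  then have "P k0" and "k0 \<le> k"
    unfolding k0_def by (rule LeastI, rule Least_le)
  moreover have "x ! (k' * b) \<noteq> x ! (k0 * b)" if "k' < k0" for k'
  proof
    assume "x ! (k' * b) = x ! (k0 * b)"
    moreover have "k' * b < length x"
      using that \<open>P k0\<close> unfolding P_def by (meson le_less_trans less_imp_le_nat mult_le_mono1)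
    ultimately have "P k'"
      using \<open>P k0\<close> by (simp add: P_def)
    with that show False
      unfolding k0_def using not_less_Least by blast
  qed
  ultimately show ?thesis
    using assms(1) by (intro bexI[of _ k0]) (auto simp: fresh_heads_def P_def)
qed

lemma burst_reduct_drop_from_earlier_head:
  assumes "k0 \<le> k" and "k \<le> t" and "k * b < length x"
    and "burst_reduct b (t - k) (drop (k * b + 1) x) y"
  shows "burst_reduct b (t - k0) (drop (k0 * b + 1) x) y"
proof -
  obtain d where d: "k = k0 + d"
    using assms(1) le_Suc_ex by blast
  let ?x' = "drop (k0 * b + 1) x"
  have "drop (d * b) ?x' = drop (k * b + 1) x"
    using d by (simp add: algebra_simps)
  then have "?x' = take (d * b) ?x' @ drop (k * b + 1) x"
    by (metis append_take_drop_id)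
  moreover have "length (take (d * b) ?x') = d * b"
    using d assms(3) by (simp add: algebra_simps)
  moreover have "t - k0 = d + (t - k)"
    using d assms(2) by simp
  ultimately show ?thesis
    using burst_reduct_drop_blocks[OF _ assms(4)] by metis
qed

lemma burst_reduct_Cons_iff_fresh:
  "burst_reduct b t x (c # y) \<longleftrightarrow>
    (\<exists>k\<in>fresh_heads b t x. x ! (k * b) = c \<and> burst_reduct b (t - k) (drop (k * b + 1) x) y)"
proof
  assume "burst_reduct b t x (c # y)"
  then obtain k where k: "k \<le> t" "k * b < length x" "x ! (k * b) = c"
      "burst_reduct b (t - k) (drop (k * b + 1) x) y"
    by (auto simp: burst_reduct_Cons_iff)
  then obtain k0 where "k0 \<in> fresh_heads b t x" "k0 \<le> k" "x ! (k0 * b) = c"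
    using fresh_head_exists by metis
  then show "\<exists>k\<in>fresh_heads b t x. x ! (k * b) = c \<and> burst_reduct b (t - k) (drop (k * b + 1) x) y"
    using burst_reduct_drop_from_earlier_head[OF \<open>k0 \<le> k\<close> k(1,2,4)] by blast
next
  assume "\<exists>k\<in>fresh_heads b t x. x ! (k * b) = c \<and> burst_reduct b (t - k) (drop (k * b + 1) x) y"
  then show "burst_reduct b t x (c # y)"
    unfolding burst_reduct_Cons_iff fresh_heads_def by blast
qed

lemma finite_Dset: "finite (Dset t b x)"
proof (induction t)
  case 0
  then show ?case by simp
next
  case (Suc t)
  have "finite (burst_step b y)" for y
  proof (rule finite_subset)
    show "burst_step b y \<subseteq> (\<lambda>i. burst_del b i y) ` {..length y}"
      unfolding burst_step_def by auto
  qed simp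
  with Suc show ?case
    by simp
qed

lemma card_Dset_short:
  assumes "length x \<le> t * b"
  shows "card (Dset t b x) = (if length x = t * b then 1 else 0)"
proof -
  have "Dset t b x = (if length x = t * b then {[]} else {})"
    using assms burst_reduct_length[of b t x] by (auto simp: Dset_eq_burst_reduct burst_reduct_Nil_iff)
  then show ?thesis
    by simp
qed

lemma Dset_long:
  assumes "t * b < length x"
  shows "Dset t b x = (\<Union>k\<in>fresh_heads b t x. (#) (x ! (k * b)) ` Dset (t - k) b (drop (k * b + 1) x))"
proof (intro set_eqI)
  fix y
  show "y \<in> Dset t b x \<longleftrightarrow> y \<in> (\<Union>k\<in>fresh_heads b t x. (#) (x ! (k * b)) ` Dset (t - k) b (drop (k * b + 1) x))"
    using assms by (cases y) (auto simp: Dset_eq_burst_reduct burst_reduct_Nil_iff burst_reduct_Cons_iff_fresh)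
qed

lemma card_Dset_long:
  assumes "t * b < length x"
  shows "card (Dset t b x) = (\<Sum>k\<in>fresh_heads b t x. card (Dset (t - k) b (drop (k * b + 1) x)))"
proof -
  have "card (Dset t b x) = (\<Sum>k\<in>fresh_heads b t x. card ((#) (x ! (k * b)) ` Dset (t - k) b (drop (k * b + 1) x)))"
    unfolding Dset_long[OF assms]
  proof (rule card_UN_disjoint)
    show "finite (fresh_heads b t x)"
      by (rule finite_fresh_heads)
    show "\<forall>k\<in>fresh_heads b t x. finite ((#) (x ! (k * b)) ` Dset (t - k) b (drop (k * b + 1) x))"
      by (simp add: finite_Dset)
    show "\<forall>i\<in>fresh_heads b t x. \<forall>j\<in>fresh_heads b t x. i \<noteq> j \<longrightarrow>
        (#) (x ! (i * b)) ` Dset (t - i) b (drop (i * b + 1) x) \<inter>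
        (#) (x ! (j * b)) ` Dset (t - j) b (drop (j * b + 1) x) = {}"
      using inj_on_fresh_heads[of x b t] by (auto dest: inj_onD)
  qed
  also have "\<dots> = (\<Sum>k\<in>fresh_heads b t x. card (Dset (t - k) b (drop (k * b + 1) x)))"
    by (intro sum.cong refl card_image) (simp add: inj_on_def)
  finally show ?thesis .
qed

section \<open>The counting recursion and the upper bound\<close>

function dcyc_rec :: "nat \<Rightarrow> nat \<Rightarrow> nat \<Rightarrow> nat \<Rightarrow> nat" where
  "dcyc_rec q b n t =
    (if n < t * b then 0 else if n = t * b then 1
     else (\<Sum>k<min q (Suc t). dcyc_rec q b (n - k * b - 1) (t - k)))"
  by pat_completeness auto
termination
  by (relation "measure (\<lambda>(q, b, n, t). n)") auto

declare dcyc_rec.simps [simp del]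

lemma dcyc_rec_short: "n \<le> t * b \<Longrightarrow> dcyc_rec q b n t = (if n = t * b then 1 else 0)"
  by (subst dcyc_rec.simps) simp

lemma dcyc_rec_long:
  "t * b < n \<Longrightarrow> dcyc_rec q b n t = (\<Sum>k<min q (Suc t). dcyc_rec q b (n - k * b - 1) (t - k))"
  by (subst dcyc_rec.simps) simp

lemma dcyc_rec_le_add_block: "dcyc_rec q b m s \<le> dcyc_rec q b (m + b) (Suc s)"
proof (induction m arbitrary: s rule: less_induct)
  case (less m)
  show ?case
  proof (cases "m \<le> s * b")
    case True
    then show ?thesis
      by (auto simp: dcyc_rec_short)
  next
    case False
    have "dcyc_rec q b m s = (\<Sum>k<min q (Suc s). dcyc_rec q b (m - k * b - 1) (s - k))"
      using False by (simp add: dcyc_rec_long)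
    also have "\<dots> \<le> (\<Sum>k<min q (Suc s). dcyc_rec q b (m + b - k * b - 1) (Suc s - k))"
    proof (rule sum_mono)
      fix k assume "k \<in> {..<min q (Suc s)}"
      then have "k * b \<le> s * b"
        by simp
      then have "k * b < m"
        using False by linarith
      then have "m + b - k * b - 1 = (m - k * b - 1) + b" and "m - k * b - 1 < m"
        by auto
      moreover have "Suc s - k = Suc (s - k)"
        using \<open>k \<in> _\<close> by auto
      ultimately show "dcyc_rec q b (m - k * b - 1) (s - k) \<le> dcyc_rec q b (m + b - k * b - 1) (Suc s - k)"
        using less.IH[of "m - k * b - 1" "s - k"] by simp
    qed
    also have "\<dots> \<le> (\<Sum>k<min q (Suc (Suc s)). dcyc_rec q b (m + b - k * b - 1) (Suc s - k))"
      by (rule sum_mono2) auto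
    also have "\<dots> = dcyc_rec q b (m + b) (Suc s)"
      using False by (simp add: dcyc_rec_long)
    finally show ?thesis .
  qed
qed

lemma dcyc_rec_le_add_blocks: "dcyc_rec q b m s \<le> dcyc_rec q b (m + d * b) (s + d)"
proof (induction d)
  case 0
  then show ?case by simp
next
  case (Suc d)
  then show ?case
    using order_trans[OF Suc.IH dcyc_rec_le_add_block[of q b "m + d * b" "s + d"]]
    by (simp add: ac_simps)
qed

lemma dcyc_rec_antimono_head:
  assumes "t * b < n" and "i \<le> j" and "j \<le> t"
  shows "dcyc_rec q b (n - j * b - 1) (t - j) \<le> dcyc_rec q b (n - i * b - 1) (t - i)"
proof -
  have "i * b \<le> j * b" and "j * b \<le> t * b" and "(j - i) * b = j * b - i * b"
    using assms by (auto simp: diff_mult_distrib)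
  then have "n - j * b - 1 + (j - i) * b = n - i * b - 1" and "t - j + (j - i) = t - i"
    using assms by linarith+
  then show ?thesis
    using dcyc_rec_le_add_blocks[of q b "n - j * b - 1" "t - j" "j - i"] by simp
qed

lemma sum_le_sum_lessThan_card:
  fixes f :: "nat \<Rightarrow> 'a::ordered_comm_monoid_add"
  assumes "finite K" and "\<And>i j. i \<le> j \<Longrightarrow> j \<in> K \<Longrightarrow> f j \<le> f i"
  shows "sum f K \<le> (\<Sum>i<card K. f i)"
  using assms
proof (induction "card K" arbitrary: K)
  case 0
  then show ?case by simp
next
  case (Suc n)
  define M where "M = Max K"
  have "K \<noteq> {}"
    using Suc.hyps(2) by auto
  then have "M \<in> K"
    using Suc.prems(1) by (simp add: M_def)
  have "K \<subseteq> {..M}"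
    using Suc.prems(1) by (simp add: M_def subset_iff)
  then have "card K \<le> Suc M"
    using card_mono[of "{..M}" K] by simp
  then have "n \<le> M"
    using Suc.hyps(2) by simp
  have n: "n = card (K - {M})"
    using Suc.hyps(2) \<open>M \<in> K\<close> Suc.prems(1) by simp
  have "sum f K = f M + sum f (K - {M})"
    using \<open>M \<in> K\<close> Suc.prems(1) by (simp add: sum.remove)
  also have "\<dots> \<le> f n + (\<Sum>i<n. f i)"
    using Suc.hyps(1)[OF n] Suc.prems \<open>n \<le> M\<close> \<open>M \<in> K\<close> by (intro add_mono) (auto simp: n)
  also have "\<dots> = (\<Sum>i<card K. f i)"
    using Suc.hyps(2)[symmetric] by (simp add: add.commute)
  finally show ?case .
qed

lemma card_fresh_heads_le:
  assumes "set x \<subseteq> {..<q}"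
  shows "card (fresh_heads b t x) \<le> min q (Suc t)"
proof -
  have heads: "(\<lambda>k. x ! (k * b)) ` fresh_heads b t x \<subseteq> {..<q}"
    using assms by (auto simp: fresh_heads_def dest!: nth_mem)
  have "card (fresh_heads b t x) \<le> q"
    using card_inj_on_le[OF inj_on_fresh_heads heads] by simp
  moreover have "card (fresh_heads b t x) \<le> Suc t"
    using card_mono[of "{..t}" "fresh_heads b t x"] by (auto simp: fresh_heads_def)
  ultimately show ?thesis
    by simp
qed

lemma card_Dset_le_dcyc_rec:
  assumes "set x \<subseteq> {..<q}"
  shows "card (Dset t b x) \<le> dcyc_rec q b (length x) t"
  using assms
proof (induction "length x" arbitrary: x t rule: less_induct)
  case less
  define n where "n = length x"
  show ?case
  proof (cases "n \<le> t * b")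
    case True
    then show ?thesis
      by (simp add: card_Dset_short dcyc_rec_short n_def)
  next
    case False
    define F where "F = fresh_heads b t x"
    define f where "f k = dcyc_rec q b (n - k * b - 1) (t - k)" for k
    have F: "k \<le> t" "k * b < n" if "k \<in> F" for k
      using that by (auto simp: F_def fresh_heads_def n_def)
    have "card (Dset t b x) = (\<Sum>k\<in>F. card (Dset (t - k) b (drop (k * b + 1) x)))"
      using card_Dset_long False by (simp add: F_def n_def)
    also have "\<dots> \<le> sum f F"
    proof (rule sum_mono)
      fix k assume "k \<in> F"
      have "set (drop (k * b + 1) x) \<subseteq> {..<q}"
        using less.prems set_drop_subset by fastforce
      then show "card (Dset (t - k) b (drop (k * b + 1) x)) \<le> f k"
        using less.hyps[of "drop (k * b + 1) x"] F[OF \<open>k \<in> F\<close>] by (simp add: f_def n_def)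
    qed
    also have "\<dots> \<le> (\<Sum>k<card F. f k)"
    proof (rule sum_le_sum_lessThan_card)
      show "finite F"
        by (simp add: F_def finite_fresh_heads)
      show "f j \<le> f i" if "i \<le> j" and "j \<in> F" for i j
        using dcyc_rec_antimono_head[of t b n i j q] that F[OF \<open>j \<in> F\<close>] False
        by (simp add: f_def)
    qed
    also have "\<dots> \<le> (\<Sum>k<min q (Suc t). f k)"
      using card_fresh_heads_le[OF less.prems] by (intro sum_mono2) (auto simp: F_def)
    also have "\<dots> = dcyc_rec q b n t"
      using False by (simp add: dcyc_rec_long f_def)
    finally show ?thesis
      by (simp add: n_def)
  qed
qed

section \<open>Suffixes of cyclic sequences\<close>

text \<open>\<open>cyc_suffix q b \<sigma> r n\<close> is \<open>Xcyc \<sigma> (n + r) q b\<close> without its first \<open>r\<close> symbols; this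
  family contains both \<open>Xcyc\<close> and \<open>Ycyc\<close> and is closed under \<open>drop\<close>.\<close>

definition cyc_suffix :: "nat \<Rightarrow> nat \<Rightarrow> nat \<Rightarrow> nat \<Rightarrow> nat \<Rightarrow> nat list" where
  "cyc_suffix q b \<sigma> r n = map (\<lambda>i. (\<sigma> + (i + r) div b) mod q) [0..<n]"

lemma length_cyc_suffix [simp]: "length (cyc_suffix q b \<sigma> r n) = n"
  by (simp add: cyc_suffix_def)

lemma nth_cyc_suffix: "i < n \<Longrightarrow> cyc_suffix q b \<sigma> r n ! i = (\<sigma> + (i + r) div b) mod q"
  by (simp add: cyc_suffix_def)

lemma drop_cyc_suffix: "drop m (cyc_suffix q b \<sigma> r n) = cyc_suffix q b \<sigma> (r + m) (n - m)"
  by (rule nth_equalityI) (simp_all add: nth_cyc_suffix ac_simps)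

lemma cyc_suffix_block_head:
  assumes "0 < b" and "k * b < n"
  shows "cyc_suffix q b \<sigma> r n ! (k * b) = (\<sigma> + r div b + k) mod q"
  using assms by (simp add: nth_cyc_suffix ac_simps)

lemma fresh_heads_cyclic:
  assumes "0 < q" and "t * b < length x" and heads: "\<And>k. k \<le> t \<Longrightarrow> x ! (k * b) = (c + k) mod q"
  shows "fresh_heads b t x = {..<min q (Suc t)}"
proof (intro set_eqI iffI)
  fix k
  assume "k \<in> fresh_heads b t x"
  then have "k \<le> t" and fresh: "\<And>k'. k' < k \<Longrightarrow> x ! (k' * b) \<noteq> x ! (k * b)"
    by (auto simp: fresh_heads_def)
  have "k < q"
  proof (rule ccontr)
    assume "\<not> k < q"
    then have "c + k = c + (k - q) + q"
      by simp
    then have "(c + (k - q)) mod q = (c + k) mod q"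
      by (metis mod_add_self2)
    then show False
      using fresh[of "k - q"] heads \<open>k \<le> t\<close> \<open>\<not> k < q\<close> assms(1) by simp
  qed
  with \<open>k \<le> t\<close> show "k \<in> {..<min q (Suc t)}"
    by simp
next
  fix k
  assume "k \<in> {..<min q (Suc t)}"
  then have "k \<le> t" and "k < q"
    by auto
  have "k * b < length x"
    using \<open>k \<le> t\<close> assms(2) by (meson le_less_trans mult_le_mono1)
  moreover have "x ! (k' * b) \<noteq> x ! (k * b)" if "k' < k" for k'
  proof
    assume "x ! (k' * b) = x ! (k * b)"
    then have "q dvd (c + k) - (c + k')"
      using heads \<open>k \<le> t\<close> that mod_eq_dvd_iff_nat[of "c + k'" "c + k" q] by simp
    then show False
      using that \<open>k < q\<close> by (auto dest: dvd_imp_le)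
  qed
  ultimately show "k \<in> fresh_heads b t x"
    using \<open>k \<le> t\<close> by (simp add: fresh_heads_def)
qed

lemma card_Dset_cyc_suffix:
  assumes "0 < b" and "0 < q"
  shows "card (Dset t b (cyc_suffix q b \<sigma> r n)) = dcyc_rec q b n t"
proof (induction n arbitrary: r t rule: less_induct)
  case (less n)
  show ?case
  proof (cases "n \<le> t * b")
    case True
    then show ?thesis
      by (simp add: card_Dset_short dcyc_rec_short)
  next
    case False
    have "k * b < n" if "k \<le> t" for k
      using that False by (meson le_less_trans mult_le_mono1 not_le)
    then have "fresh_heads b t (cyc_suffix q b \<sigma> r n) = {..<min q (Suc t)}"
      using False assms(2) cyc_suffix_block_head[OF assms(1)]
      by (intro fresh_heads_cyclic[where c = "\<sigma> + r div b"]) auto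
    then have "card (Dset t b (cyc_suffix q b \<sigma> r n)) =
        (\<Sum>k<min q (Suc t). card (Dset (t - k) b (cyc_suffix q b \<sigma> (r + (k * b + 1)) (n - (k * b + 1)))))"
      using False by (simp add: card_Dset_long drop_cyc_suffix)
    also have "\<dots> = (\<Sum>k<min q (Suc t). dcyc_rec q b (n - k * b - 1) (t - k))"
      using False by (intro sum.cong refl) (simp add: less.IH)
    also have "\<dots> = dcyc_rec q b n t"
      using False by (simp add: dcyc_rec_long)
    finally show ?thesis .
  qed
qed

lemma Xcyc_eq_cyc_suffix: "Xcyc \<sigma> n q b = cyc_suffix q b \<sigma> 0 n"
  by (simp add: Xcyc_def cyc_suffix_def)

lemma Ycyc_eq_cyc_suffix:
  assumes "0 < b" and "\<sigma> < q" and "j \<le> b" and "j \<le> n"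
  shows "Ycyc \<sigma> j n q b = cyc_suffix q b \<sigma> (b - j) n"
proof (rule nth_equalityI)
  show "length (Ycyc \<sigma> j n q b) = length (cyc_suffix q b \<sigma> (b - j) n)"
    using assms(4) by (simp add: Ycyc_def Xcyc_def)
  fix i
  assume "i < length (Ycyc \<sigma> j n q b)"
  then have "i < n"
    using assms(4) by (simp add: Ycyc_def Xcyc_def)
  show "Ycyc \<sigma> j n q b ! i = cyc_suffix q b \<sigma> (b - j) n ! i"
  proof (cases "i < j")
    case True
    then show ?thesis
      using assms \<open>i < n\<close> by (simp add: Ycyc_def nth_append nth_cyc_suffix)
  next
    case False
    then have "i + (b - j) = (i - j) + b"
      using assms(3) by simp
    then have "(i + (b - j)) div b = (i - j) div b + 1"
      using assms(1) by (simp add: div_add_self2)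
    moreover have "i - j < n - j"
      using False \<open>i < n\<close> by simp
    ultimately show ?thesis
      using False \<open>i < n\<close> by (simp add: Ycyc_def Xcyc_def nth_append nth_cyc_suffix mod_add_left_eq)
  qed
qed

lemma dcyc_eq_dcyc_rec:
  assumes "0 < b" and "0 < q" and "t * b < n"
  shows "dcyc q b (int n) (int t) = dcyc_rec q b n t"
proof -
  have "\<not> int n \<le> int b * int t"
    using assms(3) by (simp flip: of_nat_mult add: mult.commute)
  then show ?thesis
    using card_Dset_cyc_suffix[OF assms(1,2)] by (simp add: dcyc_def Xcyc_eq_cyc_suffix)
qed

lemma Dmax_eq_dcyc_rec:
  assumes "0 < b" and "0 < q"
  shows "Dmax q b n t = dcyc_rec q b n t"
  unfolding Dmax_def
proof (rule Max_eqI)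
  have "{card (Dset t b x) | x. x \<in> seqs q n} \<subseteq> {..dcyc_rec q b n t}"
    using card_Dset_le_dcyc_rec by (fastforce simp: seqs_def)
  then show "finite {card (Dset t b x) | x. x \<in> seqs q n}"
    by (rule finite_subset) simp
  show "m \<le> dcyc_rec q b n t" if "m \<in> {card (Dset t b x) | x. x \<in> seqs q n}" for m
    using that card_Dset_le_dcyc_rec by (fastforce simp: seqs_def)
  have "cyc_suffix q b 0 0 n \<in> seqs q n"
    using assms(2) by (auto simp: seqs_def cyc_suffix_def)
  then show "dcyc_rec q b n t \<in> {card (Dset t b x) | x. x \<in> seqs q n}"
    using card_Dset_cyc_suffix[OF assms, of t 0 0 n, symmetric] by blast
qed

theorem theorem4p9:
  fixes q t b n \<sigma> j :: nat
  assumes "q \<ge> 2" and "t \<ge> 1" and "b \<ge> 1" and "n \<ge> b * t + 1"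
    and "\<sigma> < q" and "j \<le> b - 1"
  shows "card (Dset t b (Ycyc \<sigma> j n q b)) = dcyc q b (int n) (int t)
       \<and> dcyc q b (int n) (int t) = Dmax q b n t"
proof -
  have "0 < b" and "0 < q" and "j \<le> b"
    using assms(1,3,6) by auto
  moreover have "t * b < n"
    using assms(4) by (simp add: mult.commute)
  moreover have "j \<le> n"
    using \<open>t * b < n\<close> \<open>j \<le> b\<close> assms(2) by (metis le_trans less_imp_le_nat mult_le_mono1 mult_1)
  ultimately show ?thesis
    using assms(5) by (simp add: Ycyc_eq_cyc_suffix card_Dset_cyc_suffix dcyc_eq_dcyc_rec Dmax_eq_dcyc_rec)
qed

end
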